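(* Let $M$ be a metric structure and $\phi(x_1,\dots,x_n)$ a $[0,1]$-valued definable predicate. Then $\phi$ has the strong Erdős–Hajnal property if and only if for all $0\leq r<s\leq 1$ there is some $\delta>0$ such that if $A_1,\dots,A_n$ are finite subsets of $M^{x_1},\dots,M^{x_n}$ respectively, then there are $B_i\subseteq A_i$ with $|B_i|\geq\delta|A_i|$ such that either $\phi(b)<s$ for all $b\in B_1\times\dots\times B_n$, or $\phi(b)>r$ for all $b\in B_1\times\dots\times B_n$.
   Context: $\phi$ has the strong Erdős–Hajnal property if for every $\varepsilon>0$ there is $\delta>0$ such that for all finite $A_i\subseteq M^{x_i}$ there are $B_i\subseteq A_i$ with $|B_i|\geq\delta|A_i|$ such that $|\phi(a)-\phi(a')|\leq\varepsilon$ for all $a,a'\in B_1\times\dots\times B_n$. *)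

theory Defs
  imports Complex_Main "HOL-Library.FuncSet"
begin

definition tuples :: "'m set \<Rightarrow> nat \<Rightarrow> 'm list set" where
  "tuples M k = {xs. length xs = k \<and> set xs \<subseteq> M}"

text \<open>A point of M^{x_1} \<times> ... \<times> M^{x_n} is an extensional function on {..<n}
  (index i stands for the paper's x_{i+1}); phi takes such a point.\<close>
definition strong_EH ::
  "'m set \<Rightarrow> nat \<Rightarrow> (nat \<Rightarrow> nat) \<Rightarrow> ((nat \<Rightarrow> 'm list) \<Rightarrow> real) \<Rightarrow> bool" where
  "strong_EH M n k \<phi> \<longleftrightarrow>
     (\<forall>\<epsilon>>0. \<exists>\<delta>>0. \<forall>A. (\<forall>i<n. finite (A i) \<and> A i \<subseteq> tuples M (k i)) \<longrightarrow>
        (\<exists>B. (\<forall>i<n. B i \<subseteq> A i \<and> real (card (B i)) \<ge> \<delta> * real (card (A i))) \<and>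
             (\<forall>a\<in>PiE {..<n} B. \<forall>a'\<in>PiE {..<n} B. \<bar>\<phi> a - \<phi> a'\<bar> \<le> \<epsilon>)))"

end

theory Submission
  imports Defs
begin

text \<open>If the values of \<open>\<phi>\<close> on a box spread by less than \<open>s - r\<close>, they cannot reach both
  \<open>\<le> r\<close> and \<open>\<ge> s\<close>; this gives the forward direction. Conversely, fix a grid
  \<open>r = j/m\<close>, \<open>s = (j+1)/m\<close> for \<open>j < m\<close>. Each of these dichotomies is inherited by
  subfamilies, so refining successively for all of them only multiplies the density bounds, and
  on a box satisfying all of them the \<open>[0,1]\<close>-valued \<open>\<phi>\<close> has spread at most \<open>2/m\<close>.\<close>

definition dense_refinable ::
  "nat \<Rightarrow> (nat \<Rightarrow> 'a set) \<Rightarrow> ((nat \<Rightarrow> 'a set) \<Rightarrow> bool) \<Rightarrow> bool" where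
  "dense_refinable n U P \<longleftrightarrow>
     (\<exists>\<delta>>0. \<forall>A. (\<forall>i<n. finite (A i) \<and> A i \<subseteq> U i) \<longrightarrow>
        (\<exists>B. (\<forall>i<n. B i \<subseteq> A i \<and> real (card (B i)) \<ge> \<delta> * real (card (A i))) \<and> P B))"

definition downward_closed :: "nat \<Rightarrow> ((nat \<Rightarrow> 'a set) \<Rightarrow> bool) \<Rightarrow> bool" where
  "downward_closed n P \<longleftrightarrow> (\<forall>B B'. P B \<longrightarrow> (\<forall>i<n. B' i \<subseteq> B i) \<longrightarrow> P B')"

definition spread_le :: "nat \<Rightarrow> ((nat \<Rightarrow> 'a) \<Rightarrow> real) \<Rightarrow> real \<Rightarrow> (nat \<Rightarrow> 'a set) \<Rightarrow> bool" where
  "spread_le n \<phi> \<epsilon> B \<longleftrightarrow> (\<forall>a\<in>PiE {..<n} B. \<forall>a'\<in>PiE {..<n} B. \<bar>\<phi> a - \<phi> a'\<bar> \<le> \<epsilon>)"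

definition below_or_above ::
  "nat \<Rightarrow> ((nat \<Rightarrow> 'a) \<Rightarrow> real) \<Rightarrow> real \<Rightarrow> real \<Rightarrow> (nat \<Rightarrow> 'a set) \<Rightarrow> bool" where
  "below_or_above n \<phi> r s B \<longleftrightarrow> (\<forall>b\<in>PiE {..<n} B. \<phi> b < s) \<or> (\<forall>b\<in>PiE {..<n} B. \<phi> b > r)"

lemma downward_closed_Ball_PiE: "downward_closed n (\<lambda>B. \<forall>b\<in>PiE {..<n} B. Q b)"
proof -
  have "PiE {..<n} B' \<subseteq> PiE {..<n} B" if "\<forall>i<n. B' i \<subseteq> B i" for B B' :: "nat \<Rightarrow> 'a set"
    using that by (intro PiE_mono) auto
  then show ?thesis
    unfolding downward_closed_def by blast
qed

lemma downward_closed_disj: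
  "downward_closed n P \<Longrightarrow> downward_closed n Q \<Longrightarrow> downward_closed n (\<lambda>B. P B \<or> Q B)"
  unfolding downward_closed_def by blast

lemma downward_closed_below_or_above: "downward_closed n (below_or_above n \<phi> r s)"
  unfolding below_or_above_def by (intro downward_closed_disj downward_closed_Ball_PiE)

lemma dense_refinable_True: "dense_refinable n U (\<lambda>_. True)"
  unfolding dense_refinable_def by (intro exI[of _ 1]) auto

lemma dense_refinable_mono:
  assumes "dense_refinable n U P"
    and P_imp_Q: "\<And>B. \<forall>i<n. B i \<subseteq> U i \<Longrightarrow> P B \<Longrightarrow> Q B"
  shows "dense_refinable n U Q"
proof -
  obtain \<delta> where "\<delta> > 0" and refine: "\<And>A. \<forall>i<n. finite (A i) \<and> A i \<subseteq> U i \<Longrightarrow>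
      \<exists>B. (\<forall>i<n. B i \<subseteq> A i \<and> real (card (B i)) \<ge> \<delta> * real (card (A i))) \<and> P B"
    using assms(1) unfolding dense_refinable_def by blast
  have "\<exists>B. (\<forall>i<n. B i \<subseteq> A i \<and> real (card (B i)) \<ge> \<delta> * real (card (A i))) \<and> Q B"
    if A: "\<forall>i<n. finite (A i) \<and> A i \<subseteq> U i" for A
  proof -
    obtain B where B: "\<forall>i<n. B i \<subseteq> A i \<and> real (card (B i)) \<ge> \<delta> * real (card (A i))"
      and "P B"
      using refine[OF A] by blast
    moreover have "\<forall>i<n. B i \<subseteq> U i"
      using A B by blast
    ultimately show ?thesis
      using P_imp_Q by blast
  qed
  with \<open>\<delta> > 0\<close> show ?thesis
    unfolding dense_refinable_def by blast
qed

lemma dense_subfamily_trans: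
  assumes "\<forall>i<n. B i \<subseteq> A i \<and> real (card (B i)) \<ge> \<delta> * real (card (A i))"
    and "\<forall>i<n. C i \<subseteq> B i \<and> real (card (C i)) \<ge> \<delta>' * real (card (B i))"
    and "\<delta>' \<ge> 0"
  shows "\<forall>i<n. C i \<subseteq> A i \<and> real (card (C i)) \<ge> \<delta>' * \<delta> * real (card (A i))"
proof (intro allI impI conjI)
  fix i assume "i < n"
  then show "C i \<subseteq> A i"
    using assms(1,2) by blast
  have "\<delta>' * \<delta> * real (card (A i)) \<le> \<delta>' * real (card (B i))"
    using assms(1,3) \<open>i < n\<close> by (simp add: mult.assoc mult_left_mono)
  also have "\<dots> \<le> real (card (C i))"
    using assms(2) \<open>i < n\<close> by blast
  finally show "\<delta>' * \<delta> * real (card (A i)) \<le> real (card (C i))" .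
qed

lemma dense_refinable_conj:
  assumes P: "dense_refinable n U P" and P_closed: "downward_closed n P"
    and Q: "dense_refinable n U Q"
  shows "dense_refinable n U (\<lambda>B. P B \<and> Q B)"
proof -
  obtain \<delta>\<^sub>P where "\<delta>\<^sub>P > 0" and refine_P: "\<And>A. \<forall>i<n. finite (A i) \<and> A i \<subseteq> U i \<Longrightarrow>
      \<exists>B. (\<forall>i<n. B i \<subseteq> A i \<and> real (card (B i)) \<ge> \<delta>\<^sub>P * real (card (A i))) \<and> P B"
    using P unfolding dense_refinable_def by blast
  obtain \<delta>\<^sub>Q where "\<delta>\<^sub>Q > 0" and refine_Q: "\<And>A. \<forall>i<n. finite (A i) \<and> A i \<subseteq> U i \<Longrightarrow>
      \<exists>B. (\<forall>i<n. B i \<subseteq> A i \<and> real (card (B i)) \<ge> \<delta>\<^sub>Q * real (card (A i))) \<and> Q B"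
    using Q unfolding dense_refinable_def by blast
  have "\<exists>C. (\<forall>i<n. C i \<subseteq> A i \<and> real (card (C i)) \<ge> \<delta>\<^sub>Q * \<delta>\<^sub>P * real (card (A i)))
            \<and> P C \<and> Q C"
    if A: "\<forall>i<n. finite (A i) \<and> A i \<subseteq> U i" for A
  proof -
    obtain B where B: "\<forall>i<n. B i \<subseteq> A i \<and> real (card (B i)) \<ge> \<delta>\<^sub>P * real (card (A i))"
      and "P B"
      using refine_P[OF A] by blast
    have "\<forall>i<n. finite (B i) \<and> B i \<subseteq> U i"
      using A B by (meson finite_subset order_trans)
    then obtain C where C: "\<forall>i<n. C i \<subseteq> B i \<and> real (card (C i)) \<ge> \<delta>\<^sub>Q * real (card (B i))"
      and "Q C"
      using refine_Q by blast
    have "P C"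
      using \<open>P B\<close> C P_closed unfolding downward_closed_def by blast
    moreover have "\<forall>i<n. C i \<subseteq> A i \<and> real (card (C i)) \<ge> \<delta>\<^sub>Q * \<delta>\<^sub>P * real (card (A i))"
      using B C less_imp_le[OF \<open>\<delta>\<^sub>Q > 0\<close>] by (rule dense_subfamily_trans)
    ultimately show ?thesis
      using \<open>Q C\<close> by blast
  qed
  moreover have "\<delta>\<^sub>Q * \<delta>\<^sub>P > 0"
    using \<open>\<delta>\<^sub>P > 0\<close> \<open>\<delta>\<^sub>Q > 0\<close> by simp
  ultimately show ?thesis
    unfolding dense_refinable_def by blast
qed

lemma dense_refinable_Ball:
  assumes "finite J"
    and "\<And>j. j \<in> J \<Longrightarrow> dense_refinable n U (P j)"
    and "\<And>j. j \<in> J \<Longrightarrow> downward_closed n (P j)"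
  shows "dense_refinable n U (\<lambda>B. \<forall>j\<in>J. P j B)"
  using assms
proof (induction J rule: finite_induct)
  case empty
  show ?case
    using dense_refinable_True by simp
next
  case (insert j J)
  then have "dense_refinable n U (\<lambda>B. P j B \<and> (\<forall>j\<in>J. P j B))"
    by (intro dense_refinable_conj) auto
  then show ?case
    by simp
qed

lemma below_or_above_if_spread_less:
  fixes S :: "real set"
  assumes "\<forall>x\<in>S. \<forall>y\<in>S. \<bar>x - y\<bar> \<le> \<epsilon>" and "\<epsilon> < s - r"
  shows "(\<forall>x\<in>S. x < s) \<or> (\<forall>x\<in>S. x > r)"
proof (rule ccontr)
  assume "\<not> ?thesis"
  then obtain x y where "x \<in> S" "y \<in> S" "x \<ge> s" "y \<le> r"
    by (auto simp: not_less)
  then have "\<bar>x - y\<bar> \<ge> s - r"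
    by linarith
  then show False
    using assms \<open>x \<in> S\<close> \<open>y \<in> S\<close> by fastforce
qed

lemma spread_le_if_grid_below_or_above:
  fixes S :: "real set" and m :: nat
  assumes S01: "S \<subseteq> {0..1}" and "m > 0"
    and grid: "\<forall>j<m. (\<forall>x\<in>S. x < real (Suc j) / m) \<or> (\<forall>x\<in>S. x > real j / m)"
  shows "\<forall>x\<in>S. \<forall>y\<in>S. \<bar>x - y\<bar> \<le> 2 / m"
proof -
  have "x - y \<le> 2 / m" if "x \<in> S" "y \<in> S" for x y
  proof (rule ccontr)
    assume "\<not> x - y \<le> 2 / m"
    then have far: "m * x > m * y + 2"
      using \<open>m > 0\<close> by (simp add: field_simps)
    define j where "j = nat \<lfloor>m * y\<rfloor>"
    have "0 \<le> y" "x \<le> 1"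
      using S01 \<open>x \<in> S\<close> \<open>y \<in> S\<close> by auto
    then have "0 \<le> m * y" "m * x \<le> m"
      by (simp_all add: mult_left_le)
    then have j_le: "real j \<le> m * y" and j_gt: "m * y < real j + 1"
      unfolding j_def by linarith+
    have "Suc j < m"
      using far j_le \<open>m * x \<le> m\<close> by linarith
    have "x \<ge> real (Suc (Suc j)) / m"
      using far j_le \<open>m > 0\<close> by (simp add: divide_le_eq mult.commute)
    moreover have "y < real (Suc j) / m"
      using j_gt \<open>m > 0\<close> by (simp add: less_divide_eq mult.commute)
    \<comment> \<open>the dichotomy at the grid point \<open>(j+1)/m\<close> just above \<open>y\<close> separates \<open>y\<close> from \<open>x\<close>\<close>
    ultimately show False
      using grid \<open>Suc j < m\<close> \<open>x \<in> S\<close> \<open>y \<in> S\<close> by fastforce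
  qed
  then show ?thesis
    by (simp add: abs_le_iff)
qed

lemma dense_refinable_below_or_above:
  assumes spreads: "\<forall>\<epsilon>>0. dense_refinable n U (spread_le n \<phi> \<epsilon>)" and "r < s"
  shows "dense_refinable n U (below_or_above n \<phi> r s)"
proof -
  have "(s - r) / 2 > 0"
    using \<open>r < s\<close> by simp
  with spreads have "dense_refinable n U (spread_le n \<phi> ((s - r) / 2))"
    by blast
  then show ?thesis
  proof (rule dense_refinable_mono)
    fix B assume "spread_le n \<phi> ((s - r) / 2) B"
    then have "\<forall>x\<in>\<phi> ` PiE {..<n} B. \<forall>y\<in>\<phi> ` PiE {..<n} B. \<bar>x - y\<bar> \<le> (s - r) / 2"
      unfolding spread_le_def by blast
    moreover have "(s - r) / 2 < s - r"
      using \<open>r < s\<close> by simp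
    ultimately have "(\<forall>x\<in>\<phi> ` PiE {..<n} B. x < s) \<or> (\<forall>x\<in>\<phi> ` PiE {..<n} B. x > r)"
      by (rule below_or_above_if_spread_less)
    then show "below_or_above n \<phi> r s B"
      unfolding below_or_above_def by simp
  qed
qed

lemma dense_refinable_spread_le:
  assumes range01: "\<forall>a\<in>PiE {..<n} U. 0 \<le> \<phi> a \<and> \<phi> a \<le> 1"
    and splits: "\<forall>r s. 0 \<le> r \<and> r < s \<and> s \<le> 1 \<longrightarrow> dense_refinable n U (below_or_above n \<phi> r s)"
    and "\<epsilon> > 0"
  shows "dense_refinable n U (spread_le n \<phi> \<epsilon>)"
proof -
  obtain m :: nat where "2 / \<epsilon> < m"
    using reals_Archimedean2 by blast
  moreover have "0 < 2 / \<epsilon>"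
    using \<open>\<epsilon> > 0\<close> by simp
  ultimately have "m > 0"
    using of_nat_0_less_iff order.strict_trans by blast
  have "2 < \<epsilon> * m"
    using \<open>2 / \<epsilon> < m\<close> \<open>\<epsilon> > 0\<close> by (simp add: divide_less_eq mult.commute)
  then have "2 / m \<le> \<epsilon>"
    using \<open>m > 0\<close> by (simp add: divide_le_eq mult.commute)
  have grid_pair: "0 \<le> real j / m \<and> real j / m < real (Suc j) / m \<and> real (Suc j) / m \<le> 1"
    if "j < m" for j
    using that \<open>m > 0\<close> by (simp add: divide_strict_right_mono divide_le_eq)
  have "dense_refinable n U (\<lambda>B. \<forall>j\<in>{..<m}. below_or_above n \<phi> (real j / m) (real (Suc j) / m) B)"
    using splits grid_pair downward_closed_below_or_above by (intro dense_refinable_Ball) auto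
  then show ?thesis
  proof (rule dense_refinable_mono)
    fix B assume "\<forall>i<n. B i \<subseteq> U i"
      and grid: "\<forall>j\<in>{..<m}. below_or_above n \<phi> (real j / m) (real (Suc j) / m) B"
    then have "\<phi> ` PiE {..<n} B \<subseteq> {0..1}"
      using range01 PiE_mono[of "{..<n}" B U] by fastforce
    moreover have "\<forall>j<m. (\<forall>x\<in>\<phi> ` PiE {..<n} B. x < real (Suc j) / m)
        \<or> (\<forall>x\<in>\<phi> ` PiE {..<n} B. x > real j / m)"
      using grid unfolding below_or_above_def by simp
    ultimately have "\<forall>x\<in>\<phi> ` PiE {..<n} B. \<forall>y\<in>\<phi> ` PiE {..<n} B. \<bar>x - y\<bar> \<le> 2 / m"
      using \<open>m > 0\<close> by (intro spread_le_if_grid_below_or_above) auto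
    then show "spread_le n \<phi> \<epsilon> B"
      using \<open>2 / m \<le> \<epsilon>\<close> unfolding spread_le_def by force
  qed
qed

theorem mainTheorem12:
  fixes M :: "'m set" and n :: nat and k :: "nat \<Rightarrow> nat"
    and \<phi> :: "(nat \<Rightarrow> 'm list) \<Rightarrow> real"
  assumes range01: "\<And>a. a \<in> PiE {..<n} (\<lambda>i. tuples M (k i)) \<Longrightarrow> 0 \<le> \<phi> a \<and> \<phi> a \<le> 1"
  shows "strong_EH M n k \<phi> \<longleftrightarrow>
    (\<forall>r s::real. 0 \<le> r \<and> r < s \<and> s \<le> 1 \<longrightarrow>
       (\<exists>\<delta>>0. \<forall>A. (\<forall>i<n. finite (A i) \<and> A i \<subseteq> tuples M (k i)) \<longrightarrow>
          (\<exists>B. (\<forall>i<n. B i \<subseteq> A i \<and> real (card (B i)) \<ge> \<delta> * real (card (A i))) \<and>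
               ((\<forall>b\<in>PiE {..<n} B. \<phi> b < s) \<or> (\<forall>b\<in>PiE {..<n} B. \<phi> b > r)))))"
    (is "_ \<longleftrightarrow> ?splits")
proof -
  let ?U = "\<lambda>i. tuples M (k i)"
  have "strong_EH M n k \<phi> \<longleftrightarrow> (\<forall>\<epsilon>>0. dense_refinable n ?U (spread_le n \<phi> \<epsilon>))"
    unfolding strong_EH_def dense_refinable_def spread_le_def ..
  also have "\<dots> \<longleftrightarrow>
      (\<forall>r s. 0 \<le> r \<and> r < s \<and> s \<le> 1 \<longrightarrow> dense_refinable n ?U (below_or_above n \<phi> r s))"
    using dense_refinable_below_or_above dense_refinable_spread_le[of n ?U \<phi>] range01 by blast
  also have "\<dots> \<longleftrightarrow> ?splits"
    unfolding dense_refinable_def below_or_above_def ..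
  finally show ?thesis .
qed

end
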